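(* Let $(E,\langle\cdot,\cdot\rangle,\rho,\circ)$ be a pre-Courant algebroid over $M$ with Jacobiator $J$. Then $J\in C^{3}_{\mathcal D}(E,\operatorname{Ker}(\rho))$ and $\partial J=0$. Equivalently, $J^\flat\in C^4_{\mathcal D}(E)$ and $\mathcal D(J^\flat)=0$.
   Context: A Courant vector bundle over a smooth manifold $M$ is a vector bundle $E\to M$ with a fibrewise nondegenerate symmetric bilinear form $\langle\cdot,\cdot\rangle$ (extended $C^\infty(M)$-bilinearly to sections) and a bundle map $\rho:E\to TM$ such that $\rho\circ\rho^*=0$, where $\rho^*:T^*M\to E^*\cong E$ is the dual of $\rho$ followed by the identification $E^*\cong E$ via $\langle\cdot,\cdot\rangle$. A pre-Courant algebroid structure on it is an $\mathbb R$-bilinear operation $\circ$ on $\Gamma(E)$ such that for all $e_1,e_2,e_3\in\Gamma(E)$: (i) $\rho(e_1\circ e_2)=[\rho(e_1),\rho(e_2)]$; (ii) $\langle e_1\circ e_1,e_2\rangle=\frac12\rho(e_2)\langle e_1,e_1\rangle$; (iii) $\rho(e_1)\langle e_2,e_3\rangle=\langle e_1\circ e_2,e_3\rangle+\langle e_2,e_1\circ e_3\rangle$. Define $\mathcal D:C^\infty(M)\to\Gamma(E)$ by $\langle\mathcal Df,e\rangle=\rho(e)f$. The Jacobiator is $J(e_1,e_2,e_3)=e_1\circ(e_2\circ e_3)-(e_1\circ e_2)\circ e_3-e_2\circ(e_1\circ e_3)$. $C^k_{\mathcal D}(E)$ is the space of skew-symmetric $C^\infty(M)$-multilinear maps $\psi:\Gamma(E)^k\to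 C^\infty(M)$ with $\psi(\mathcal Df,e_2,\dots,e_k)=0$ for all $f\in C^\infty(M)$ (equivalently, sections of $\wedge^k\operatorname{Ker}(\rho)$ viewed in $\wedge^kE^*$ via $\langle\cdot,\cdot\rangle$). $C^k_{\mathcal D}(E,\operatorname{Ker}(\rho))$ is the space of $C^\infty(M)$-multilinear maps $\phi:\Gamma(E)^k\to\Gamma(E)$ such that (1) $\phi$ takes values in $\Gamma(\operatorname{Ker}\rho)$, (2) $\phi(\mathcal Df,e_2,\dots,e_k)=0$ for all $f$, (3) $(e_1,\dots,e_{k+1})\mapsto\langle\phi(e_1,\dots,e_k),e_{k+1}\rangle$ is totally skew-symmetric. For such $\phi$, $\phi^\flat\in C^{k+1}_{\mathcal D}(E)$ is $\phi^\flat(e_1,\dots,e_{k+1})=\langle\phi(e_1,\dots,e_k),e_{k+1}\rangle$. $\mathcal D:C^k_{\mathcal D}(E)\to C^{k+1}_{\mathcal D}(E)$: $\mathcal D\psi(e_1,\dots,e_{k+1})=\sum_{i=1}^{k+1}(-1)^{i+1}\rho(e_i)\psi(e_1,\dots,\widehat{e_i},\dots,e_{k+1})+\sum_{i<j}(-1)^{i+j}\psi(e_i\circ e_j,e_1,\dots,\widehat{e_i},\dots,\widehat{e_j},\dots,e_{k+1})$. $\partial:C^k_{\mathcal D}(E,\operatorname{Ker}\rho)\to C^{k+1}_{\mathcal D}(E,\operatorname{Ker}\rho)$: $\partial\phi(e_1,\dots,e_{k+1})=\sum_{i=1}^k(-1)^{i+1}e_i\circ\phi(e_1,\dots,\widehat{e_i},\dots,e_{k+1})+(-1)^{k+1}\phi(e_1,\dots,e_k)\circ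 e_{k+1}+\sum_{i<j}(-1)^{i+j}\phi(e_i\circ e_j,e_1,\dots,\widehat{e_i},\dots,\widehat{e_j},\dots,e_{k+1})$. *)

theory Defs
  imports Main "HOL.Real_Vector_Spaces"
begin

text \<open>Algebraic model of a pre-Courant algebroid.
  'a plays the role of the real algebra C^infinity(M), 'e the C^infinity(M)-module of
  sections Gamma(E).  smult is the module action, pair the pairing, rho e is the
  vector field rho(e) acting as a derivation on functions, br the operation on sections,
  Dop the operator D.\<close>

locale pre_courant =
  fixes smult :: "'a::{comm_ring_1,real_algebra_1} \<Rightarrow> 'e::ab_group_add \<Rightarrow> 'e"
    and pair :: "'e \<Rightarrow> 'e \<Rightarrow> 'a"
    and rho :: "'e \<Rightarrow> 'a \<Rightarrow> 'a"
    and br :: "'e \<Rightarrow> 'e \<Rightarrow> 'e"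
    and Dop :: "'a \<Rightarrow> 'e"
  assumes smult_add_right: "smult f (x + y) = smult f x + smult f y"
    and smult_add_left: "smult (f + g) x = smult f x + smult g x"
    and smult_assoc: "smult (f * g) x = smult f (smult g x)"
    and smult_one: "smult 1 x = x"
    and pair_sym: "pair x y = pair y x"
    and pair_add: "pair (x + y) z = pair x z + pair y z"
    and pair_smult: "pair (smult f x) y = f * pair x y"
    and pair_nondeg: "(\<And>y. pair x y = 0) \<Longrightarrow> x = 0"
    and rho_add: "rho (x + y) g = rho x g + rho y g"
    and rho_smult: "rho (smult f x) g = f * rho x g"
    and rho_deriv_add: "rho x (f + g) = rho x f + rho x g"
    and rho_deriv_real: "rho x (of_real c * f) = of_real c * rho x f"
    and rho_deriv_mult: "rho x (f * g) = f * rho x g + g * rho x f"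
    and Dop_def: "pair (Dop f) e = rho e f"
    \<comment> \<open>rho o rho^* = 0 (applied to exact forms df: rho^*(df) = D f)\<close>
    and rho_Dop: "rho (Dop f) = (\<lambda>_. 0)"
    and br_add_left: "br (x + y) z = br x z + br y z"
    and br_add_right: "br x (y + z) = br x y + br x z"
    and br_real_left: "br (smult (of_real c) x) y = smult (of_real c) (br x y)"
    and br_real_right: "br x (smult (of_real c) y) = smult (of_real c) (br x y)"
    and ax_i: "rho (br e1 e2) = (\<lambda>f. rho e1 (rho e2 f) - rho e2 (rho e1 f))"
    and ax_ii: "pair (br e1 e1) e2 = of_real (1/2) * rho e2 (pair e1 e1)"
    and ax_iii: "rho e1 (pair e2 e3) = pair (br e1 e2) e3 + pair e2 (br e1 e3)"

definition jacobiator :: "('e::ab_group_add \<Rightarrow> 'e \<Rightarrow> 'e) \<Rightarrow> 'e \<Rightarrow> 'e \<Rightarrow> 'e \<Rightarrow> 'e" where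
  "jacobiator br e1 e2 e3 = br e1 (br e2 e3) - br (br e1 e2) e3 - br e2 (br e1 e3)"

text \<open>Multi-argument maps are modelled as functions on lists; only lists of the
  relevant length k matter.\<close>
definition jac_list :: "('e::ab_group_add \<Rightarrow> 'e \<Rightarrow> 'e) \<Rightarrow> 'e list \<Rightarrow> 'e" where
  "jac_list br es = jacobiator br (es ! 0) (es ! 1) (es ! 2)"

definition del :: "nat \<Rightarrow> 'x list \<Rightarrow> 'x list" where
  "del i xs = take i xs @ drop (Suc i) xs"

definition sgnsc :: "nat \<Rightarrow> 'e::ab_group_add \<Rightarrow> 'e" where
  "sgnsc i x = (if even i then x else - x)"

definition multilin :: "('a \<Rightarrow> 'e::ab_group_add \<Rightarrow> 'e) \<Rightarrow> ('a \<Rightarrow> 'b::ab_group_add \<Rightarrow> 'b)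
    \<Rightarrow> nat \<Rightarrow> ('e list \<Rightarrow> 'b) \<Rightarrow> bool" where
  "multilin smult tsm k \<phi> \<longleftrightarrow>
     (\<forall>xs i x y f. length xs = k \<longrightarrow> i < k \<longrightarrow>
        \<phi> (xs[i := x + y]) = \<phi> (xs[i := x]) + \<phi> (xs[i := y]) \<and>
        \<phi> (xs[i := smult f x]) = tsm f (\<phi> (xs[i := x])))"

definition skew :: "nat \<Rightarrow> ('e list \<Rightarrow> 'b::ab_group_add) \<Rightarrow> bool" where
  "skew k \<psi> \<longleftrightarrow> (\<forall>xs i j. length xs = k \<longrightarrow> i < j \<longrightarrow> j < k \<longrightarrow>
      \<psi> (xs[i := xs ! j, j := xs ! i]) = - \<psi> xs)"

definition cochain_D :: "('a::comm_ring_1 \<Rightarrow> 'e::ab_group_add \<Rightarrow> 'e) \<Rightarrow> ('a \<Rightarrow> 'e) \<Rightarrow> nat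
    \<Rightarrow> ('e list \<Rightarrow> 'a) \<Rightarrow> bool" where
  "cochain_D smult Dop k \<psi> \<longleftrightarrow> multilin smult (*) k \<psi> \<and> skew k \<psi> \<and>
     (\<forall>f xs. Suc (length xs) = k \<longrightarrow> \<psi> (Dop f # xs) = 0)"

definition flat :: "('e \<Rightarrow> 'e \<Rightarrow> 'a) \<Rightarrow> ('e list \<Rightarrow> 'e) \<Rightarrow> 'e list \<Rightarrow> 'a" where
  "flat pair \<phi> es = pair (\<phi> (butlast es)) (last es)"

definition cochain_Ker :: "('a::comm_ring_1 \<Rightarrow> 'e::ab_group_add \<Rightarrow> 'e) \<Rightarrow> ('e \<Rightarrow> 'e \<Rightarrow> 'a)
    \<Rightarrow> ('e \<Rightarrow> 'a \<Rightarrow> 'a) \<Rightarrow> ('a \<Rightarrow> 'e) \<Rightarrow> nat \<Rightarrow> ('e list \<Rightarrow> 'e) \<Rightarrow> bool" where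
  "cochain_Ker smult pair rho Dop k \<phi> \<longleftrightarrow> multilin smult smult k \<phi> \<and>
     (\<forall>xs. length xs = k \<longrightarrow> rho (\<phi> xs) = (\<lambda>_. 0)) \<and>
     (\<forall>f xs. Suc (length xs) = k \<longrightarrow> \<phi> (Dop f # xs) = 0) \<and>
     skew (Suc k) (flat pair \<phi>)"

text \<open>The differential D on C^k_D(E), evaluated on a list of k+1 sections (0-based indices).\<close>
definition dD :: "('e \<Rightarrow> 'a::comm_ring_1 \<Rightarrow> 'a) \<Rightarrow> ('e \<Rightarrow> 'e \<Rightarrow> 'e) \<Rightarrow> ('e list \<Rightarrow> 'a)
    \<Rightarrow> 'e list \<Rightarrow> 'a" where
  "dD rho br \<psi> es =
     (\<Sum>i<length es. (-1) ^ i * rho (es ! i) (\<psi> (del i es))) +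
     (\<Sum>j<length es. \<Sum>i<j. (-1) ^ (i + j) * \<psi> (br (es ! i) (es ! j) # del i (del j es)))"

text \<open>The differential partial on C^k_D(E, Ker rho), evaluated on k+1 sections (0-based).\<close>
definition dpartial :: "('e::ab_group_add \<Rightarrow> 'e \<Rightarrow> 'e) \<Rightarrow> ('e list \<Rightarrow> 'e) \<Rightarrow> 'e list \<Rightarrow> 'e" where
  "dpartial br \<phi> es =
     (\<Sum>i<length es - 1. sgnsc i (br (es ! i) (\<phi> (del i es)))) +
     sgnsc (length es) (br (\<phi> (butlast es)) (last es)) +
     (\<Sum>j<length es. \<Sum>i<j. sgnsc (i + j) (\<phi> (br (es ! i) (es ! j) # del i (del j es))))"

end

theory Submission
  imports Defs
begin

text \<open>Polarising axiom (ii) gives \<open>e\<^sub>1 \<circ> e\<^sub>2 + e\<^sub>2 \<circ> e\<^sub>1 = \<D>\<langle>e\<^sub>1,e\<^sub>2\<rangle>\<close>, and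
  (i), (iii) then show \<open>\<D>f \<circ> e = 0\<close> and \<open>e \<circ> \<D>f = \<D>(\<rho>(e)f)\<close>. Hence the Jacobiator is
  skew in its first two arguments (the symmetric part of \<open>\<circ>\<close> lies in the image of \<open>\<D>\<close>,
  which is killed on the left) and in its last two (the symmetric part produces
  \<open>\<D>\<close>-terms that cancel by (iii)). Expanding \<open>\<langle>J(a,b,c),d\<rangle>\<close> twice with (iii) and using (i)
  shows that it is skew in \<open>c, d\<close>, so \<open>J\<^sup>\<flat>\<close> is totally skew; being
  \<open>C\<^sup>\<infinity>(M)\<close>-linear in the last slot, it is then linear in every slot, and by
  nondegeneracy so is \<open>J\<close>. By (i), \<open>\<rho>(J(a,b,c))\<close> is the Jacobiator of vector fields,
  which vanishes. Finally axiom (iii) turns \<open>\<D>(J\<^sup>\<flat>)\<close> into \<open>(\<partial>J)\<^sup>\<flat>\<close>, and \<open>\<partial>J = 0\<close>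
  is a direct expansion.\<close>

lemma sgnsc_0: "sgnsc 0 x = x"
  by (simp add: sgnsc_def)

lemma sgnsc_Suc: "sgnsc (Suc n) x = - sgnsc n x"
  by (simp add: sgnsc_def)

lemma length_eq_3_conv: "length xs = 3 \<longleftrightarrow> (\<exists>a b c. xs = [a, b, c])"
  by (auto simp: eval_nat_numeral length_Suc_conv)

lemma length_eq_4_conv: "length xs = 4 \<longleftrightarrow> (\<exists>a b c d. xs = [a, b, c, d])"
  by (auto simp: eval_nat_numeral length_Suc_conv)

lemma length_eq_5_conv: "length xs = 5 \<longleftrightarrow> (\<exists>a b c d e. xs = [a, b, c, d, e])"
  by (auto simp: eval_nat_numeral length_Suc_conv)

context pre_courant
begin

lemma br_zero_left [simp]: "br 0 y = 0"
  using br_add_left[of 0 0 y] by simp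

lemma br_zero_right [simp]: "br y 0 = 0"
  using br_add_right[of y 0 0] by simp

lemma br_minus_left: "br (- x) y = - br x y"
  using br_add_left[of x "- x" y] by (simp add: eq_neg_iff_add_eq_0 add.commute)

lemma br_minus_right: "br y (- x) = - br y x"
  using br_add_right[of y x "- x"] by (simp add: eq_neg_iff_add_eq_0 add.commute)

lemma br_diff_left: "br (x - z) y = br x y - br z y"
  using br_add_left[of x "- z" y] by (simp add: br_minus_left)

lemma br_diff_right: "br y (x - z) = br y x - br y z"
  using br_add_right[of y x "- z"] by (simp add: br_minus_right)

lemma pair_zero_left [simp]: "pair 0 y = 0"
  using pair_add[of 0 0 y] by simp

lemma pair_minus_left: "pair (- x) y = - pair x y"
  using pair_add[of x "- x" y] by (simp add: eq_neg_iff_add_eq_0 add.commute)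

lemma pair_diff_left: "pair (x - z) y = pair x y - pair z y"
  using pair_add[of x "- z" y] by (simp add: pair_minus_left)

lemma pair_add_right: "pair y (x + z) = pair y x + pair y z"
  by (simp only: pair_sym[of y] pair_add)

lemma pair_smult_right: "pair y (smult f x) = f * pair y x"
  by (simp only: pair_sym[of y] pair_smult)

lemma pair_eqI: "(\<And>z. pair x z = pair y z) \<Longrightarrow> x = y"
  using pair_nondeg[of "x - y"] by (simp add: pair_diff_left)

lemma rho_zero_left: "rho 0 g = 0"
  using rho_add[of 0 0 g] by simp

lemma rho_minus_left: "rho (- x) g = - rho x g"
  using rho_add[of x "- x" g] by (simp add: rho_zero_left eq_neg_iff_add_eq_0 add.commute)

lemma rho_diff_left: "rho (x - z) g = rho x g - rho z g"
  using rho_add[of x "- z" g] by (simp add: rho_minus_left)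

lemma rho_zero_right: "rho x 0 = 0"
  using rho_deriv_add[of x 0 0] by simp

lemma rho_minus_right: "rho x (- f) = - rho x f"
  using rho_deriv_add[of x f "- f"] by (simp add: rho_zero_right eq_neg_iff_add_eq_0 add.commute)

lemma rho_diff_right: "rho x (f - g) = rho x f - rho x g"
  using rho_deriv_add[of x f "- g"] by (simp add: rho_minus_right)

lemma Dop_add: "Dop (f + g) = Dop f + Dop g"
  by (rule pair_eqI) (simp add: Dop_def pair_add rho_deriv_add)

lemma of_real_half_double: "of_real (1/2) * (a + a) = (a :: 'a)"
proof -
  have "of_real (1/2) * (a + a) = of_real (1/2 * 2) * a"
    by (simp add: mult_2[symmetric] mult.assoc del: times_divide_eq_left)
  then show ?thesis
    by simp
qed

lemma br_add_br_commute: "br x y + br y x = Dop (pair x y)"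
proof (rule pair_eqI)
  fix z
  have "pair (br (x + y) (x + y)) z
      = pair (br x x) z + pair (br y y) z + pair (br x y + br y x) z"
    by (simp add: br_add_left br_add_right pair_add algebra_simps)
  moreover have "rho z (pair (x + y) (x + y))
      = rho z (pair x x) + rho z (pair y y) + (rho z (pair x y) + rho z (pair x y))"
    by (simp only: pair_add pair_add_right pair_sym[of y x] rho_deriv_add add_ac)
  ultimately have "pair (br x y + br y x) z
      = of_real (1/2) * (rho z (pair x y) + rho z (pair x y))"
    by (simp add: ax_ii distrib_left)
  then show "pair (br x y + br y x) z = pair (Dop (pair x y)) z"
    by (simp only: of_real_half_double Dop_def)
qed

lemma br_Dop_right: "br y (Dop f) = Dop (rho y f)"
proof (rule pair_eqI)
  fix z
  have "pair (br y (Dop f)) z = rho y (rho z f) - rho (br y z) f"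
    using ax_iii[of y "Dop f" z] by (simp add: Dop_def algebra_simps)
  also have "\<dots> = rho z (rho y f)"
    by (simp add: ax_i)
  finally show "pair (br y (Dop f)) z = pair (Dop (rho y f)) z"
    by (simp add: Dop_def)
qed

lemma br_Dop_left: "br (Dop f) y = 0"
  using br_add_br_commute[of "Dop f" y] by (simp add: br_Dop_right Dop_def)

lemma rho_jacobiator: "rho (jacobiator br a b c) g = 0"
  by (simp add: jacobiator_def rho_diff_left ax_i rho_diff_right)

lemma jacobiator_Dop_left: "jacobiator br (Dop f) b c = 0"
  by (simp add: jacobiator_def br_Dop_left br_Dop_right)

lemma jacobiator_swap_12: "jacobiator br b a c = - jacobiator br a b c"
proof -
  have "br (br a b) c + br (br b a) c = 0"
    by (simp add: br_add_left[symmetric] br_add_br_commute br_Dop_left)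
  then have "br (br b a) c = - br (br a b) c"
    by (simp add: eq_neg_iff_add_eq_0 add.commute)
  then show ?thesis
    by (simp add: jacobiator_def algebra_simps)
qed

lemma jacobiator_swap_23: "jacobiator br a c b = - jacobiator br a b c"
proof -
  have inner: "br a (br c b) = br a (Dop (pair b c)) - br a (br b c)"
    using arg_cong[of _ _ "br a", OF br_add_br_commute[of b c]]
    by (simp add: br_add_right eq_diff_eq add.commute)
  have outer_c: "br c (br a b) = Dop (pair (br a b) c) - br (br a b) c"
    using br_add_br_commute[of "br a b" c] by (simp add: eq_diff_eq add.commute)
  have outer_b: "br b (br a c) = Dop (pair (br a c) b) - br (br a c) b"
    using br_add_br_commute[of "br a c" b] by (simp add: eq_diff_eq add.commute)
  have "br a (Dop (pair b c)) = Dop (pair (br a b) c) + Dop (pair (br a c) b)"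
    by (simp add: br_Dop_right ax_iii pair_sym[of b "br a c"] Dop_add)
  then show ?thesis
    by (simp add: jacobiator_def inner outer_c outer_b algebra_simps)
qed

lemma pair_br_br:
  "pair (br a (br b c)) d = rho a (rho b (pair c d)) - pair (br a c) (br b d)
     - pair c (br a (br b d)) - pair (br b c) (br a d)"
proof -
  have "pair (br a (br b c)) d = rho a (pair (br b c) d) - pair (br b c) (br a d)"
    using ax_iii[of a "br b c" d] by (simp add: algebra_simps)
  also have "pair (br b c) d = rho b (pair c d) - pair c (br b d)"
    using ax_iii[of b c d] by (simp add: algebra_simps)
  finally show ?thesis
    using ax_iii[of a c "br b d"] by (simp add: rho_diff_right algebra_simps)
qed

text \<open>The second-order terms \<open>\<rho>(a)\<rho>(b)\<langle>c,d\<rangle> - \<rho>(b)\<rho>(a)\<langle>c,d\<rangle>\<close> of the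
  two double brackets cancel against \<open>\<rho>(a\<circ>b)\<langle>c,d\<rangle>\<close> by (i).\<close>

lemma pair_jacobiator_swap_34: "pair (jacobiator br a b c) d = - pair (jacobiator br a b d) c"
proof -
  have "pair (br (br a b) c) d = rho a (rho b (pair c d)) - rho b (rho a (pair c d))
      - pair c (br (br a b) d)"
    using ax_iii[of "br a b" c d] by (simp add: ax_i algebra_simps)
  then have "pair (jacobiator br a b c) d
      = - pair c (br a (br b d)) + pair c (br (br a b) d) + pair c (br b (br a d))"
    by (simp add: jacobiator_def pair_diff_left pair_br_br[of a b] pair_br_br[of b a]
        pair_sym[of "br b c" "br a d"])
  also have "\<dots> = - pair (jacobiator br a b d) c"
    by (simp add: jacobiator_def pair_diff_left pair_sym[of c])
  finally show ?thesis .
qed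

lemma pair_jacobiator_swap_12: "pair (jacobiator br b a c) d = - pair (jacobiator br a b c) d"
  by (subst jacobiator_swap_12) (rule pair_minus_left)

lemma pair_jacobiator_swap_23: "pair (jacobiator br a c b) d = - pair (jacobiator br a b c) d"
  by (subst jacobiator_swap_23) (rule pair_minus_left)

lemma pair_jacobiator_rotate: "pair (jacobiator br x b c) d = - pair (jacobiator br b c d) x"
  by (simp only: pair_jacobiator_swap_12[of x b] pair_jacobiator_swap_23[of b x]
      pair_jacobiator_swap_34[of b c x] minus_minus)

lemma pair_jacobiator_move_2: "pair (jacobiator br a x c) d = pair (jacobiator br a c d) x"
  by (simp only: pair_jacobiator_swap_23[of a x] pair_jacobiator_swap_34[of a c x] minus_minus)

lemma flat_jac_list: "flat pair (jac_list br) [a, b, c, d] = pair (jacobiator br a b c) d"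
  by (simp add: flat_def jac_list_def)

lemma skew_flat_jac_list: "skew 4 (flat pair (jac_list br))"
  unfolding skew_def
proof (intro allI impI)
  fix xs :: "'e list" and i j :: nat
  assume "length xs = 4" "i < j" "j < 4"
  then obtain a b c d where xs: "xs = [a, b, c, d]"
    by (auto simp: length_eq_4_conv)
  have transp_13: "pair (jacobiator br c b a) d = - pair (jacobiator br a b c) d"
    by (simp only: pair_jacobiator_swap_12[of c b a d] pair_jacobiator_swap_23[of b c a d]
        pair_jacobiator_swap_12[of b a c d] minus_minus)
  have transp_14: "pair (jacobiator br d b c) a = - pair (jacobiator br a b c) d"
    by (simp only: pair_jacobiator_swap_12[of d b c a] pair_jacobiator_swap_23[of b d c a]
        pair_jacobiator_swap_34[of b c d a] pair_jacobiator_swap_23[of b c a d]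
        pair_jacobiator_swap_12[of b a c d] minus_minus)
  have transp_24: "pair (jacobiator br a d c) b = - pair (jacobiator br a b c) d"
    by (simp only: pair_jacobiator_swap_23[of a d c b] pair_jacobiator_swap_34[of a c d b]
        pair_jacobiator_swap_23[of a c b d] minus_minus)
  from \<open>i < j\<close> \<open>j < 4\<close> consider "i = 0" "j = 1" | "i = 0" "j = 2" | "i = 0" "j = 3"
    | "i = 1" "j = 2" | "i = 1" "j = 3" | "i = 2" "j = 3"
    by linarith
  then show "flat pair (jac_list br) (xs[i := xs ! j, j := xs ! i]) = - flat pair (jac_list br) xs"
    by cases (simp_all add: xs flat_jac_list eval_nat_numeral transp_13 transp_14 transp_24
        pair_jacobiator_swap_12[of b a c d] pair_jacobiator_swap_23[of a c b d]
        pair_jacobiator_swap_34[of a b d c])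
qed

text \<open>Linearity in the last slot is that of the pairing; total skew-symmetry moves
  every other slot there.\<close>

lemma multilin_flat_jac_list: "multilin smult (*) 4 (flat pair (jac_list br))"
  unfolding multilin_def
proof (intro allI impI)
  fix xs :: "'e list" and i :: nat and x y and f :: 'a
  assume "length xs = 4" "i < 4"
  then obtain a b c d where xs: "xs = [a, b, c, d]"
    by (auto simp: length_eq_4_conv)
  from \<open>i < 4\<close> consider "i = 0" | "i = 1" | "i = 2" | "i = 3"
    by linarith
  then show "flat pair (jac_list br) (xs[i := x + y])
        = flat pair (jac_list br) (xs[i := x]) + flat pair (jac_list br) (xs[i := y]) \<and>
      flat pair (jac_list br) (xs[i := smult f x]) = f * flat pair (jac_list br) (xs[i := x])"
    by cases (simp_all add: xs flat_jac_list eval_nat_numeral pair_jacobiator_rotate[of _ b c d]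
        pair_jacobiator_move_2[of a _ c d] pair_jacobiator_swap_34[of a b _ d]
        pair_add_right pair_smult_right algebra_simps)
qed

lemma jacobiator_smult_1: "jacobiator br (smult f x) b c = smult f (jacobiator br x b c)"
  by (rule pair_eqI) (simp add: pair_smult pair_jacobiator_rotate[of _ b c] pair_smult_right)

lemma jacobiator_smult_2: "jacobiator br a (smult f x) c = smult f (jacobiator br a x c)"
  by (rule pair_eqI) (simp add: pair_smult pair_jacobiator_move_2[of a _ c] pair_smult_right)

lemma jacobiator_smult_3: "jacobiator br a b (smult f x) = smult f (jacobiator br a b x)"
  by (rule pair_eqI)
    (simp add: pair_smult pair_jacobiator_swap_34[of a b "smult f x"]
      pair_jacobiator_swap_34[of a b x] pair_smult_right)

lemma jacobiator_add_1: "jacobiator br (x + y) b c = jacobiator br x b c + jacobiator br y b c"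
  and jacobiator_add_2: "jacobiator br a (x + y) c = jacobiator br a x c + jacobiator br a y c"
  and jacobiator_add_3: "jacobiator br a b (x + y) = jacobiator br a b x + jacobiator br a b y"
  by (simp_all add: jacobiator_def br_add_left br_add_right algebra_simps)

lemma multilin_jac_list: "multilin smult smult 3 (jac_list br)"
  unfolding multilin_def
proof (intro allI impI)
  fix xs :: "'e list" and i :: nat and x y and f :: 'a
  assume "length xs = 3" "i < 3"
  then obtain a b c where xs: "xs = [a, b, c]"
    by (auto simp: length_eq_3_conv)
  from \<open>i < 3\<close> consider "i = 0" | "i = 1" | "i = 2"
    by linarith
  then show "jac_list br (xs[i := x + y]) = jac_list br (xs[i := x]) + jac_list br (xs[i := y]) \<and>
      jac_list br (xs[i := smult f x]) = smult f (jac_list br (xs[i := x]))"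
    by cases (simp_all add: xs jac_list_def eval_nat_numeral jacobiator_add_1 jacobiator_add_2
        jacobiator_add_3 jacobiator_smult_1 jacobiator_smult_2 jacobiator_smult_3)
qed

lemma cochain_Ker_jac_list: "cochain_Ker smult pair rho Dop 3 (jac_list br)"
  unfolding cochain_Ker_def
proof (intro conjI allI impI)
  show "multilin smult smult 3 (jac_list br)"
    by (rule multilin_jac_list)
  show "skew (Suc 3) (flat pair (jac_list br))"
    using skew_flat_jac_list by (simp add: eval_nat_numeral)
  show "rho (jac_list br xs) = (\<lambda>_. 0)" for xs
    by (simp add: jac_list_def rho_jacobiator fun_eq_iff)
  show "jac_list br (Dop f # xs) = 0" for f xs
    by (simp add: jac_list_def jacobiator_Dop_left)
qed

lemma cochain_D_flat_jac_list: "cochain_D smult Dop 4 (flat pair (jac_list br))"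
  unfolding cochain_D_def
proof (intro conjI allI impI)
  show "multilin smult (*) 4 (flat pair (jac_list br))"
    by (rule multilin_flat_jac_list)
  show "skew 4 (flat pair (jac_list br))"
    by (rule skew_flat_jac_list)
  fix f and xs :: "'e list"
  assume "Suc (length xs) = 4"
  then obtain a b c where "xs = [a, b, c]"
    by (auto simp: length_eq_3_conv)
  then show "flat pair (jac_list br) (Dop f # xs) = 0"
    by (simp add: flat_jac_list jacobiator_Dop_left)
qed

text \<open>The five \<open>\<rho>\<close>-terms of \<open>\<D>(\<phi>\<^sup>\<flat>)\<close> are expanded by (iii) (the last one after
  writing \<open>\<rho>(e)\<langle>x,d\<rangle> = \<langle>x\<circ>d + d\<circ>x, e\<rangle>\<close>); the brackets with the last argument are
  rotated out of \<open>\<phi>\<close> by skew-symmetry of \<open>\<phi>\<^sup>\<flat>\<close>.\<close>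

lemma dD_flat_eq_pair_dpartial:
  assumes rotate: "\<And>x b c d. pair (\<phi> [x, b, c]) d = - pair (\<phi> [b, c, d]) x"
  shows "dD rho br (flat pair \<phi>) [a, b, c, d, e] = pair (dpartial br \<phi> [a, b, c, d]) e"
  by (simp add: dD_def dpartial_def flat_def del_def sgnsc_0 sgnsc_Suc eval_nat_numeral
      ax_iii[of a "\<phi> [b, c, d]" e] ax_iii[of b "\<phi> [a, c, d]" e]
      ax_iii[of c "\<phi> [a, b, d]" e] ax_iii[of d "\<phi> [a, b, c]" e]
      Dop_def[of "pair (\<phi> [a, b, c]) d" e, symmetric] br_add_br_commute[symmetric]
      rotate[of "br a e" b c d] rotate[of "br b e" a c d] rotate[of "br c e" a b d]
      rotate[of "br d e" a b c] pair_add pair_diff_left pair_minus_left)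

lemma dpartial_jac_list: "dpartial br (jac_list br) [a, b, c, d] = 0"
  by (simp add: dpartial_def jac_list_def del_def sgnsc_0 sgnsc_Suc eval_nat_numeral
      jacobiator_swap_12[of "br a c" b d] jacobiator_swap_12[of "br a d" b c]
      jacobiator_swap_23[of b "br a d" c] jacobiator_swap_12[of "br b c" a d]
      jacobiator_swap_12[of "br b d" a c] jacobiator_swap_23[of a "br b d" c]
      jacobiator_swap_12[of "br c d" a b] jacobiator_swap_23[of a "br c d" b])
    (simp add: jacobiator_def br_diff_left br_diff_right br_minus_left br_minus_right
      br_add_left br_add_right algebra_simps)

lemma dD_flat_jac_list: "dD rho br (flat pair (jac_list br)) [a, b, c, d, e] = 0"
proof -
  have rotate: "pair (jac_list br [x, b, c]) d = - pair (jac_list br [b, c, d]) x" for x b c d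
    by (simp add: jac_list_def pair_jacobiator_rotate[of x b c d])
  show ?thesis
    unfolding dD_flat_eq_pair_dpartial[OF rotate] dpartial_jac_list by simp
qed

end

theorem theorem3p4:
  assumes "pre_courant smult pair rho br Dop"
  shows "cochain_Ker smult pair rho Dop 3 (jac_list br) \<and>
         (\<forall>es. length es = 4 \<longrightarrow> dpartial br (jac_list br) es = 0) \<and>
         cochain_D smult Dop 4 (flat pair (jac_list br)) \<and>
         (\<forall>es. length es = 5 \<longrightarrow> dD rho br (flat pair (jac_list br)) es = 0)"
proof -
  interpret pre_courant smult pair rho br Dop
    by (rule assms)
  show ?thesis
    by (auto simp: cochain_Ker_jac_list cochain_D_flat_jac_list dpartial_jac_list
        dD_flat_jac_list length_eq_4_conv length_eq_5_conv)
qed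

end
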